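(* Let $\sigma$ be an erasing $k$-block substitution with $w_\epsilon\ne1^k$. Then for every $x\in f_\sigma(\mathbb I)\setminus\mathcal Q_2^0$, the fiber $f_\sigma^{-1}(x)$ is uncountable.
   Context: Notation: $\mathbb I=[0,1]$. $\mathcal Q_2^0$ is the set of dyadic rationals in $[0,1)$, i.e. the dyadic rationals of $\mathbb I$ other than $1$. $\{0,1\}^*$ and $\{0,1\}^\omega$ denote finite and infinite binary words, and $\epsilon$ is the empty word. For a word $w$, set $0.w=\sum_iw_i2^{-i}$. For $x\in(0,1]$, $\widetilde x$ is the unique infinite binary expansion of $x$ not ending in $0^\infty$. Fix $k\ge2$. An erasing $k$-block substitution is a map $\sigma:\{0,1\}^k\to\{0,1\}^*$ with exactly one block $w_\epsilon$ such that $\sigma(w_\epsilon)=\epsilon$. It acts blockwise on infinite words, concatenating the images of consecutive $k$-blocks. The map $f_\sigma:\mathbb I\to\mathbb I$ is defined by $f_\sigma(x)=0.\sigma(\widetilde x)$ if $x\in(0,1]$ and $\widetilde x\neq w_\epsilon^\infty$, and $f_\sigma(x)=0$ otherwise. *)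

theory Defs
  imports "HOL-Analysis.Analysis"
begin

text \<open>Binary words are lists of booleans (True = 1, False = 0); infinite binary
words are functions nat => bool, position 0 being the first digit.\<close>

definition bin_val :: "bool list \<Rightarrow> real" where
  "bin_val w = (\<Sum>i<length w. (if w ! i then 1 else 0) / 2 ^ (i + 1))"

definition inf_bin_val :: "(nat \<Rightarrow> bool) \<Rightarrow> real" where
  "inf_bin_val d = (\<Sum>i. (if d i then 1 else 0) / 2 ^ (i + 1))"

definition bin_exp :: "real \<Rightarrow> (nat \<Rightarrow> bool)" where
  "bin_exp x = (THE d. inf_bin_val d = x \<and> (\<forall>N. \<exists>i\<ge>N. d i))"

definition Q2_0 :: "real set" where
  "Q2_0 = {x. 0 \<le> x \<and> x < 1 \<and> (\<exists>(a::int) (n::nat). x = a / 2 ^ n)}"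

definition erasing_subst :: "nat \<Rightarrow> (bool list \<Rightarrow> bool list) \<Rightarrow> bool" where
  "erasing_subst k \<sigma> \<longleftrightarrow> (\<exists>!w. length w = k \<and> \<sigma> w = [])"

definition w_eps :: "nat \<Rightarrow> (bool list \<Rightarrow> bool list) \<Rightarrow> bool list" where
  "w_eps k \<sigma> = (THE w. length w = k \<and> \<sigma> w = [])"

definition block :: "nat \<Rightarrow> (nat \<Rightarrow> bool) \<Rightarrow> nat \<Rightarrow> bool list" where
  "block k d m = map (\<lambda>j. d (m * k + j)) [0..<k]"

text \<open>0.sigma(d): the value of the concatenation of sigma applied to consecutive
k-blocks (finite or infinite word), as the limit of the values of its prefixes
sigma(b_0)...sigma(b_(n-1)).\<close>
definition subst_val :: "nat \<Rightarrow> (bool list \<Rightarrow> bool list) \<Rightarrow> (nat \<Rightarrow> bool) \<Rightarrow> real" where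
  "subst_val k \<sigma> d = lim (\<lambda>n. bin_val (concat (map (\<lambda>m. \<sigma> (block k d m)) [0..<n])))"

definition f_sigma :: "nat \<Rightarrow> (bool list \<Rightarrow> bool list) \<Rightarrow> real \<Rightarrow> real" where
  "f_sigma k \<sigma> x =
     (if 0 < x \<and> x \<le> 1 \<and> \<not> (\<forall>i. bin_exp x i = w_eps k \<sigma> ! (i mod k))
      then subst_val k \<sigma> (bin_exp x) else 0)"

end

theory Submission
  imports Defs
begin

text \<open>Let \<open>x = f\<^sub>\<sigma>(y) \<notin> \<Q>\<^sub>2\<^sup>0\<close> and let \<open>b\<^sub>0 b\<^sub>1 \<dots>\<close> be the \<open>k\<close>-blocks of the expansion of \<open>y\<close>.
  Infinitely many of them differ from \<open>w\<^sub>\<epsilon>\<close>, since otherwise \<open>x\<close> would be the value of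
  a finite word, hence dyadic. For every set \<open>A\<close> of such indices, replace each block \<open>b\<^sub>n\<close>
  by the pair \<open>w\<^sub>\<epsilon> b\<^sub>n\<close> if \<open>n \<in> A\<close> and by \<open>b\<^sub>n w\<^sub>\<epsilon>\<close> otherwise. Erasing \<open>w\<^sub>\<epsilon>\<close> gives back
  \<open>\<sigma>(b\<^sub>0) \<sigma>(b\<^sub>1) \<dots>\<close>, so all the resulting points lie in the fiber of \<open>x\<close>, and distinct \<open>A\<close>
  give distinct points.\<close>

lemma bin_val_snoc: "bin_val (w @ [a]) = bin_val w + (if a then 1 else 0) / 2 ^ (length w + 1)"
  unfolding bin_val_def by (simp add: nth_append)

lemma bin_val_le_append: "bin_val w \<le> bin_val (w @ v)"
proof (induction v rule: rev_induct)
  case (snoc a v)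
  have "bin_val (w @ v) \<le> bin_val (w @ v @ [a])"
    using bin_val_snoc[of "w @ v" a] by simp
  with snoc show ?case by simp
qed simp

lemma bin_val_nonneg: "0 \<le> bin_val w"
  using bin_val_le_append[of "[]" w] by (simp add: bin_val_def)

lemma bin_val_le: "bin_val w \<le> 1 - 1 / 2 ^ length w"
proof (induction w rule: rev_induct)
  case (snoc a v)
  have "(if a then 1 else 0) / (2::real) ^ (length v + 1) \<le> 1 / 2 ^ (length v + 1)"
    by (simp add: divide_right_mono)
  moreover have "(1::real) - 1 / 2 ^ length v + 1 / 2 ^ (length v + 1) = 1 - 1 / 2 ^ (length v + 1)"
    by (simp add: field_simps)
  ultimately show ?case using snoc bin_val_snoc[of v a] by auto
qed (simp add: bin_val_def)

lemma bin_val_dyadic: "\<exists>a::int. bin_val w = a / 2 ^ length w"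
proof (induction w rule: rev_induct)
  case Nil
  then show ?case by (simp add: bin_val_def)
next
  case (snoc c v)
  then obtain a :: int where "bin_val v = a / 2 ^ length v" by blast
  then have "bin_val (v @ [c]) = (2 * a + (if c then 1 else 0)) / 2 ^ length (v @ [c])"
    using bin_val_snoc[of v c] by (simp add: field_simps)
  then show ?case by blast
qed

lemma bin_val_less_1: "bin_val w < 1"
proof -
  have "0 < 1 / (2::real) ^ length w" by simp
  then show ?thesis using bin_val_le[of w] by linarith
qed

lemma bin_val_in_Q2_0: "bin_val w \<in> Q2_0"
  unfolding Q2_0_def using bin_val_nonneg bin_val_less_1 bin_val_dyadic by blast

definition digit_val :: "(nat \<Rightarrow> bool) \<Rightarrow> nat \<Rightarrow> real" where
  "digit_val d i = (if d i then 1 else 0) / 2 ^ (i + 1)"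

lemma digit_val_nonneg: "0 \<le> digit_val d i"
  by (simp add: digit_val_def)

lemma digit_val_le: "digit_val d i \<le> (1/2) ^ Suc i"
  by (simp add: digit_val_def power_one_over)

lemma summable_digit_val: "summable (digit_val d)"
  by (rule summable_comparison_test[of _ "\<lambda>i. (1/2::real) ^ Suc i"])
     (use digit_val_le digit_val_nonneg sums_summable[OF power_half_series] in auto)

lemma inf_bin_val_eq_suminf: "inf_bin_val d = (\<Sum>i. digit_val d i)"
  unfolding inf_bin_val_def digit_val_def by simp

lemma inf_bin_val_le_1: "inf_bin_val d \<le> 1"
proof -
  have "(\<Sum>i. digit_val d i) \<le> (\<Sum>i. (1/2::real) ^ Suc i)"
    by (rule suminf_le) (use digit_val_le summable_digit_val sums_summable[OF power_half_series] in auto)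
  then show ?thesis
    using inf_bin_val_eq_suminf sums_unique[OF power_half_series] by simp
qed

lemma inf_bin_val_pos: "d i \<Longrightarrow> 0 < inf_bin_val d"
  unfolding inf_bin_val_eq_suminf
  by (rule suminf_pos2[of _ i]) (use summable_digit_val digit_val_nonneg in \<open>auto simp: digit_val_def\<close>)

lemma summable_digit_val_tail: "summable (\<lambda>j. digit_val d (j + n))"
  by (subst summable_iff_shift) (rule summable_digit_val)

lemma inf_bin_val_split:
  "inf_bin_val d = (\<Sum>j<i. digit_val d j) + digit_val d i + (\<Sum>j. digit_val d (j + Suc i))"
  unfolding inf_bin_val_eq_suminf
  using suminf_split_initial_segment[OF summable_digit_val, of d "Suc i"] by simp

lemma digit_tail_le: "(\<Sum>j. digit_val d (j + Suc i)) \<le> 1 / 2 ^ Suc i"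
proof -
  have geom: "(\<lambda>j. (1/2::real) ^ Suc i * (1/2) ^ Suc j) sums ((1/2) ^ Suc i * 1)"
    by (rule sums_mult[OF power_half_series])
  have "(\<Sum>j. digit_val d (j + Suc i)) \<le> (\<Sum>j. (1/2::real) ^ Suc i * (1/2) ^ Suc j)"
  proof (rule suminf_le)
    fix j
    show "digit_val d (j + Suc i) \<le> (1/2::real) ^ Suc i * (1/2) ^ Suc j"
      using digit_val_le[of d "j + Suc i"] by (simp add: power_add[symmetric] add.commute)
  qed (use geom sums_summable summable_digit_val_tail[of d "Suc i"] in auto)
  then show ?thesis using sums_unique[OF geom] by (simp add: power_one_over)
qed

lemma digit_tail_pos: "d m \<Longrightarrow> i < m \<Longrightarrow> 0 < (\<Sum>j. digit_val d (j + Suc i))"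
proof (rule suminf_pos2[of _ "m - Suc i"])
  show "summable (\<lambda>j. digit_val d (j + Suc i))" by (rule summable_digit_val_tail)
qed (auto simp: digit_val_def)

lemma inf_bin_val_less:
  assumes "\<forall>j<i. d j = e j" and "d i" and "\<not> e i" and "\<forall>N. \<exists>m\<ge>N. d m"
  shows "inf_bin_val e < inf_bin_val d"
proof -
  obtain m where m: "Suc i \<le> m" "d m" using assms(4) by blast
  have same_prefix: "(\<Sum>j<i. digit_val d j) = (\<Sum>j<i. digit_val e j)"
    using assms(1) by (simp add: digit_val_def)
  have "inf_bin_val e \<le> (\<Sum>j<i. digit_val e j) + 1 / 2 ^ Suc i"
    using inf_bin_val_split[of e i] digit_tail_le[of e i] assms(3) by (simp add: digit_val_def)
  also have "\<dots> < (\<Sum>j<i. digit_val d j) + digit_val d i + (\<Sum>j. digit_val d (j + Suc i))"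
    using same_prefix digit_tail_pos[of d m i] m assms(2) by (simp add: digit_val_def)
  also have "\<dots> = inf_bin_val d"
    using inf_bin_val_split[of d i] by simp
  finally show ?thesis .
qed

lemma inf_bin_val_inject:
  assumes "\<forall>N. \<exists>m\<ge>N. d m" and "\<forall>N. \<exists>m\<ge>N. e m" and "inf_bin_val d = inf_bin_val e"
  shows "d = e"
proof (rule ccontr)
  assume "d \<noteq> e"
  then obtain i where i: "d i \<noteq> e i" "\<forall>j<i. d j = e j"
    using exists_least_iff[of "\<lambda>i. d i \<noteq> e i"] by auto
  then show False
    using inf_bin_val_less[of i d e] inf_bin_val_less[of i e d] assms by (cases "d i") auto
qed

lemma bin_exp_inf_bin_val: "\<forall>N. \<exists>m\<ge>N. d m \<Longrightarrow> bin_exp (inf_bin_val d) = d"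
  unfolding bin_exp_def by (rule the_equality) (use inf_bin_val_inject in auto)

definition subst_prefix :: "(bool list \<Rightarrow> bool list) \<Rightarrow> (nat \<Rightarrow> bool list) \<Rightarrow> nat \<Rightarrow> real" where
  "subst_prefix \<sigma> B n = bin_val (concat (map (\<lambda>m. \<sigma> (B m)) [0..<n]))"

lemma subst_val_eq_lim: "subst_val k \<sigma> d = lim (subst_prefix \<sigma> (block k d))"
  unfolding subst_val_def subst_prefix_def ..

lemma subst_prefix_convergent: "subst_prefix \<sigma> B \<longlonglongrightarrow> lim (subst_prefix \<sigma> B)"
proof -
  have "incseq (subst_prefix \<sigma> B)"
    by (rule incseq_SucI) (simp add: subst_prefix_def bin_val_le_append)
  moreover have "\<forall>n. subst_prefix \<sigma> B n \<le> 1"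
    by (simp add: subst_prefix_def bin_val_less_1 less_imp_le)
  ultimately show ?thesis
    using incseq_convergent by (metis limI)
qed

lemma lim_subst_prefix_in_Q2_0:
  assumes "\<forall>m\<ge>M. \<sigma> (B m) = []"
  shows "lim (subst_prefix \<sigma> B) \<in> Q2_0"
proof -
  have "subst_prefix \<sigma> B (M + j) = subst_prefix \<sigma> B M" for j
    by (induction j) (use assms in \<open>simp_all add: subst_prefix_def\<close>)
  then have "eventually (\<lambda>n. subst_prefix \<sigma> B n = subst_prefix \<sigma> B M) sequentially"
    unfolding eventually_sequentially by (metis le_add_diff_inverse)
  then have "lim (subst_prefix \<sigma> B) = subst_prefix \<sigma> B M"
    by (rule limI[OF tendsto_eventually])
  then show ?thesis
    by (simp add: subst_prefix_def bin_val_in_Q2_0)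
qed

lemma infinite_non_erased_if_not_dyadic:
  assumes "\<sigma> e = []" and "lim (subst_prefix \<sigma> B) \<notin> Q2_0"
  shows "infinite {m. B m \<noteq> e}"
proof
  assume "finite {m. B m \<noteq> e}"
  then obtain M where "\<forall>m\<in>{m. B m \<noteq> e}. m \<le> M"
    using finite_nat_set_iff_bounded_le by blast
  then have "\<forall>m\<ge>Suc M. \<sigma> (B m) = []"
    using assms(1) by fastforce
  then show False
    using lim_subst_prefix_in_Q2_0 assms(2) by blast
qed

definition interleave_erased :: "'a \<Rightarrow> (nat \<Rightarrow> 'a) \<Rightarrow> nat set \<Rightarrow> nat \<Rightarrow> 'a" where
  "interleave_erased e B A m = (if even m \<longleftrightarrow> m div 2 \<in> A then e else B (m div 2))"

lemma interleave_erased_hits_block: "\<exists>m\<ge>2 * n. interleave_erased e B A m = B n"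
proof (cases "n \<in> A")
  case True
  then have "interleave_erased e B A (2 * n + 1) = B n" by (simp add: interleave_erased_def)
  then show ?thesis using le_add1 by blast
next
  case False
  then have "interleave_erased e B A (2 * n) = B n" by (simp add: interleave_erased_def)
  then show ?thesis by blast
qed

lemma interleave_erased_hits_erased: "\<exists>m\<ge>2 * n. interleave_erased e B A m = e"
proof (cases "n \<in> A")
  case True
  then have "interleave_erased e B A (2 * n) = e" by (simp add: interleave_erased_def)
  then show ?thesis by blast
next
  case False
  then have "interleave_erased e B A (2 * n + 1) = e" by (simp add: interleave_erased_def)
  then show ?thesis using le_add1 by blast
qed

lemma inj_on_interleave_erased:
  assumes "\<forall>n\<in>N. B n \<noteq> e"
  shows "inj_on (interleave_erased e B) (Pow N)"
proof (rule inj_onI)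
  fix A A' assume A: "A \<in> Pow N" "A' \<in> Pow N" and eq: "interleave_erased e B A = interleave_erased e B A'"
  show "A = A'"
  proof (rule ccontr)
    assume "A \<noteq> A'"
    then obtain n where "n \<in> N" and "n \<in> A \<longleftrightarrow> n \<notin> A'"
      using A by blast
    then have "interleave_erased e B A (2 * n) \<noteq> interleave_erased e B A' (2 * n)"
      using assms by (auto simp: interleave_erased_def)
    then show False using eq by simp
  qed
qed

lemma subst_prefix_interleave_erased:
  assumes "\<sigma> e = []"
  shows "subst_prefix \<sigma> (interleave_erased e B A) (2 * n) = subst_prefix \<sigma> B n"
proof -
  have "concat (map (\<lambda>m. \<sigma> (interleave_erased e B A m)) [0..<2 * n])
      = concat (map (\<lambda>m. \<sigma> (B m)) [0..<n])"
  proof (induction n)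
    case (Suc n)
    have "[0..<2 * Suc n] = [0..<2 * n] @ [2 * n, Suc (2 * n)]"
      by (simp add: upt_conv_Cons)
    with Suc show ?case
      using assms by (simp add: interleave_erased_def)
  qed simp
  then show ?thesis unfolding subst_prefix_def by simp
qed

lemma lim_subst_prefix_interleave_erased:
  assumes "\<sigma> e = []"
  shows "lim (subst_prefix \<sigma> (interleave_erased e B A)) = lim (subst_prefix \<sigma> B)"
proof -
  let ?X = "subst_prefix \<sigma> (interleave_erased e B A)"
  have "(?X \<circ> (\<lambda>n. 2 * n)) \<longlonglongrightarrow> lim ?X"
    by (rule LIMSEQ_subseq_LIMSEQ[OF subst_prefix_convergent]) (simp add: strict_mono_def)
  moreover have "?X \<circ> (\<lambda>n. 2 * n) = subst_prefix \<sigma> B"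
    using subst_prefix_interleave_erased[of \<sigma> e, OF assms] by (simp add: o_def)
  ultimately show ?thesis
    using subst_prefix_convergent LIMSEQ_unique by metis
qed

definition word_of_blocks :: "nat \<Rightarrow> (nat \<Rightarrow> bool list) \<Rightarrow> nat \<Rightarrow> bool" where
  "word_of_blocks k B i = B (i div k) ! (i mod k)"

lemma word_of_blocks_at: "j < k \<Longrightarrow> word_of_blocks k B (m * k + j) = B m ! j"
  unfolding word_of_blocks_def by simp

lemma block_word_of_blocks: "length (B m) = k \<Longrightarrow> block k (word_of_blocks k B) m = B m"
  unfolding block_def by (rule nth_equalityI) (simp_all add: word_of_blocks_at)

lemma word_of_blocks_frequently:
  assumes "\<forall>m. length (B m) = k" and "\<forall>M. \<exists>m\<ge>M. True \<in> set (B m)"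
  shows "\<forall>M. \<exists>i\<ge>M. word_of_blocks k B i"
proof
  fix M
  obtain m where "M \<le> m" and "True \<in> set (B m)" using assms(2) by blast
  then obtain j where j: "j < k" "B m ! j"
    using assms(1) by (metis in_set_conv_nth)
  moreover have "m \<le> m * k" using j(1) by simp
  ultimately have "M \<le> m * k + j" using \<open>M \<le> m\<close> by linarith
  with j show "\<exists>i\<ge>M. word_of_blocks k B i" by (auto simp: word_of_blocks_at)
qed

lemma replicate_False_if_no_True: "True \<notin> set w \<Longrightarrow> w = replicate (length w) False"
  by (induction w) auto

lemma length_block: "length (block k d m) = k"
  by (simp add: block_def)

lemma block_periodic: "length w = k \<Longrightarrow> \<forall>i. d i = w ! (i mod k) \<Longrightarrow> block k d m = w"
  unfolding block_def by (rule nth_equalityI) simp_all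

lemma uncountable_Pow_nat:
  assumes "infinite (N :: nat set)"
  shows "uncountable (Pow N)"
proof
  assume "countable (Pow N)"
  then have "countable (image (enumerate N) ` Pow UNIV)"
    using bij_betw_image_Pow[OF bij_enumerate[OF assms]] by (simp add: bij_betw_def)
  then have "countable (Pow (UNIV :: nat set))"
    using bij_betw_image_Pow[OF bij_enumerate[OF assms]] countable_image_inj_on
    by (auto simp: bij_betw_def)
  then obtain f :: "nat \<Rightarrow> nat set" where "range f = UNIV"
    by (metis Pow_UNIV UNIV_not_empty uncountable_def)
  then obtain a where "f a = {n. n \<notin> f n}" by (metis UNIV_I imageE)
  then show False by blast
qed

lemma w_eps_erased:
  assumes "erasing_subst k \<sigma>"
  shows "length (w_eps k \<sigma>) = k" and "\<sigma> (w_eps k \<sigma>) = []"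
  using theI'[OF assms[unfolded erasing_subst_def]] unfolding w_eps_def by auto

definition interleave_word :: "nat \<Rightarrow> bool list \<Rightarrow> (nat \<Rightarrow> bool) \<Rightarrow> nat set \<Rightarrow> nat \<Rightarrow> bool" where
  "interleave_word k e d A = word_of_blocks k (interleave_erased e (block k d) A)"

context
  fixes k :: nat and \<sigma> :: "bool list \<Rightarrow> bool list" and d :: "nat \<Rightarrow> bool"
  assumes length_w_eps: "length (w_eps k \<sigma>) = k"
    and erases_w_eps: "\<sigma> (w_eps k \<sigma>) = []"
    and infinite_non_w_eps: "infinite {m. block k d m \<noteq> w_eps k \<sigma>}"
begin

private abbreviation "e \<equiv> w_eps k \<sigma>"

lemma length_interleave_erased_block: "length (interleave_erased e (block k d) A m) = k"
  using length_w_eps by (simp add: interleave_erased_def length_block)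

lemma block_interleave_word: "block k (interleave_word k e d A) = interleave_erased e (block k d) A"
  using block_word_of_blocks[where B = "interleave_erased e (block k d) A", OF length_interleave_erased_block]
  by (auto simp: interleave_word_def)

lemma interleave_word_frequently: "\<forall>M. \<exists>i\<ge>M. interleave_word k e d A i"
proof -
  have "\<exists>m\<ge>M. True \<in> set (interleave_erased e (block k d) A m)" for M
  proof (cases "True \<in> set e")
    case True
    obtain m where "2 * M \<le> m" "interleave_erased e (block k d) A m = e"
      using interleave_erased_hits_erased[of M e "block k d" A] by blast
    with True show ?thesis by (intro exI[of _ m]) auto
  next
    case False
    obtain n where n: "M \<le> n" "block k d n \<noteq> e"
      using infinite_non_w_eps unfolding infinite_nat_iff_unbounded_le by blast
    have "True \<in> set (block k d n)"
    proof (rule ccontr)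
      assume "True \<notin> set (block k d n)"
      then have "block k d n = replicate k False"
        using replicate_False_if_no_True length_block by metis
      moreover have "e = replicate k False"
        using replicate_False_if_no_True[OF False] by (simp only: length_w_eps)
      ultimately have "block k d n = e" by simp
      with n(2) show False ..
    qed
    moreover obtain m where "2 * n \<le> m" "interleave_erased e (block k d) A m = block k d n"
      using interleave_erased_hits_block[of n e "block k d" A] by blast
    ultimately show ?thesis using n(1) by (intro exI[of _ m]) auto
  qed
  then have "\<forall>M. \<exists>m\<ge>M. True \<in> set (interleave_erased e (block k d) A m)" by blast
  then show ?thesis
    unfolding interleave_word_def
    by (rule word_of_blocks_frequently[OF allI[OF length_interleave_erased_block]])
qed

lemma interleave_word_not_periodic: "\<not> (\<forall>i. interleave_word k e d A i = e ! (i mod k))"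
proof
  assume "\<forall>i. interleave_word k e d A i = e ! (i mod k)"
  then have "block k (interleave_word k e d A) m = e" for m
    by (rule block_periodic[OF length_w_eps])
  then have all_e: "interleave_erased e (block k d) A m = e" for m
    by (simp add: block_interleave_word)
  obtain n where "block k d n \<noteq> e"
    using not_finite_existsD[OF infinite_non_w_eps] by blast
  moreover obtain m where "interleave_erased e (block k d) A m = block k d n"
    using interleave_erased_hits_block[of n e "block k d" A] by blast
  ultimately show False using all_e by simp
qed

lemma f_sigma_interleave_word:
  "f_sigma k \<sigma> (inf_bin_val (interleave_word k e d A)) = subst_val k \<sigma> d"
  and inf_bin_val_interleave_word_in_unit: "inf_bin_val (interleave_word k e d A) \<in> {0..1}"
proof -
  have exp: "bin_exp (inf_bin_val (interleave_word k e d A)) = interleave_word k e d A"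
    by (rule bin_exp_inf_bin_val[OF interleave_word_frequently])
  obtain i where "interleave_word k e d A i"
    using interleave_word_frequently by blast
  then have pos: "0 < inf_bin_val (interleave_word k e d A)"
    by (rule inf_bin_val_pos)
  then show "inf_bin_val (interleave_word k e d A) \<in> {0..1}"
    using inf_bin_val_le_1 by simp
  have "subst_val k \<sigma> (interleave_word k e d A) = subst_val k \<sigma> d"
    unfolding subst_val_eq_lim block_interleave_word
    by (rule lim_subst_prefix_interleave_erased[of \<sigma> e, OF erases_w_eps])
  then show "f_sigma k \<sigma> (inf_bin_val (interleave_word k e d A)) = subst_val k \<sigma> d"
    using pos inf_bin_val_le_1 interleave_word_not_periodic by (simp add: f_sigma_def exp)
qed

lemma inj_on_inf_bin_val_interleave_word:
  "inj_on (\<lambda>A. inf_bin_val (interleave_word k e d A)) (Pow {m. block k d m \<noteq> e})"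
proof (rule inj_onI)
  fix A A' assume A: "A \<in> Pow {m. block k d m \<noteq> e}" "A' \<in> Pow {m. block k d m \<noteq> e}"
    and eq: "inf_bin_val (interleave_word k e d A) = inf_bin_val (interleave_word k e d A')"
  have "interleave_word k e d A = interleave_word k e d A'"
    by (metis eq bin_exp_inf_bin_val interleave_word_frequently)
  then have "interleave_erased e (block k d) A = interleave_erased e (block k d) A'"
    by (metis block_interleave_word)
  moreover have "inj_on (interleave_erased e (block k d)) (Pow {m. block k d m \<noteq> e})"
    by (rule inj_on_interleave_erased) simp
  ultimately show "A = A'"
    using A by (auto dest: inj_onD)
qed

end


theorem lemma3p3:
  fixes k :: nat and \<sigma> :: "bool list \<Rightarrow> bool list"
  assumes "k \<ge> 2"
    and "erasing_subst k \<sigma>"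
    and "w_eps k \<sigma> \<noteq> replicate k True"
  shows "\<forall>x \<in> f_sigma k \<sigma> ` {0..1} - Q2_0.
           uncountable {y \<in> {0..1}. f_sigma k \<sigma> y = x}"
proof
  fix x assume "x \<in> f_sigma k \<sigma> ` {0..1} - Q2_0"
  then obtain y where y: "x = f_sigma k \<sigma> y" and x_not_dyadic: "x \<notin> Q2_0" by blast
  define d where "d = bin_exp y"
  have "0 \<in> Q2_0" unfolding Q2_0_def by force
  then have x: "x = subst_val k \<sigma> d"
    using y x_not_dyadic by (auto simp: f_sigma_def d_def split: if_splits)
  let ?N = "{m. block k d m \<noteq> w_eps k \<sigma>}"
  have infinite: "infinite ?N"
    using infinite_non_erased_if_not_dyadic[of \<sigma> "w_eps k \<sigma>", OF w_eps_erased(2)[OF assms(2)]] x x_not_dyadic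
    by (simp add: subst_val_eq_lim)
  note interleave = w_eps_erased[OF assms(2)] infinite
  let ?Y = "\<lambda>A. inf_bin_val (interleave_word k (w_eps k \<sigma>) d A)"
  have "?Y ` Pow ?N \<subseteq> {y \<in> {0..1}. f_sigma k \<sigma> y = x}"
    using f_sigma_interleave_word[OF interleave] inf_bin_val_interleave_word_in_unit[OF interleave] x
    by auto
  moreover have "uncountable (?Y ` Pow ?N)"
    using uncountable_Pow_nat[OF infinite] inj_on_inf_bin_val_interleave_word[OF interleave]
      countable_image_inj_on by blast
  ultimately show "uncountable {y \<in> {0..1}. f_sigma k \<sigma> y = x}"
    using countable_subset by blast
qed

end
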